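(* Let $\mathcal{A},\mathcal{B}$ be standard operator algebras on infinite-dimensional Banach spaces $\mathcal{X},\mathcal{Y}$, and let $\phi:\mathcal{A}\to\mathcal{B}$ be a bijection such that $\phi$ is 2-quadratic preserving in both directions. Then $\phi(0)=0$ and $\phi(\mathbb{F}I)=\mathbb{F}I$; in particular $\phi(I)=\lambda I$ for some scalar $\lambda$.
   Context: A standard operator algebra on $\mathcal{X}$ is a norm-closed subalgebra of $\mathcal{B}(\mathcal{X})$ containing the identity $I$ and all finite-rank operators; $\mathbb{F}\in\{\mathbb{R},\mathbb{C}\}$ is the scalar field. An operator $T$ is quadratic if there exist scalars $a,b$ with $(T-aI)(T-bI)=0$. $\phi_2:\mathcal{A}\otimes M_2\to\mathcal{B}\otimes M_2$ is $\phi_2((a_{ij})_{2\times 2})=(\phi(a_{ij}))_{2\times 2}$, and "2-quadratic preserving in both directions" means $T\in\mathcal{A}\otimes M_2$ is quadratic iff $\phi_2(T)$ is quadratic. *)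

theory Defs
  imports "HOL-Analysis.Analysis"
begin

text \<open>Scalar field: 'k :: real_normed_field (by Mazur/Gelfand-Mazur, a commutative real
normed division algebra is R or C up to isometric isomorphism, so this covers exactly
F in {R, C}).\<close>

definition kbanach :: "('k::real_normed_field \<Rightarrow> 'v::banach \<Rightarrow> 'v) \<Rightarrow> bool" where
  "kbanach sc \<longleftrightarrow> vector_space sc \<and> (\<forall>c x. norm (sc c x) = norm c * norm x)
     \<and> (\<forall>r x. sc (of_real r) x = scaleR r x)"

definition inf_dim :: "('k::field \<Rightarrow> 'v::ab_group_add \<Rightarrow> 'v) \<Rightarrow> bool" where
  "inf_dim sc \<longleftrightarrow> \<not> (\<exists>F. finite F \<and> module.span sc F = UNIV)"

definition bop :: "('k::real_normed_field \<Rightarrow> 'v::real_normed_vector \<Rightarrow> 'v) \<Rightarrow> ('v \<Rightarrow> 'v) \<Rightarrow> bool" where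
  "bop sc T \<longleftrightarrow> Vector_Spaces.linear sc sc T \<and> (\<exists>K. \<forall>x. norm (T x) \<le> K * norm x)"

definition finite_rank :: "('k::real_normed_field \<Rightarrow> 'v::real_normed_vector \<Rightarrow> 'v) \<Rightarrow> ('v \<Rightarrow> 'v) \<Rightarrow> bool" where
  "finite_rank sc T \<longleftrightarrow> bop sc T \<and> (\<exists>F. finite F \<and> range T \<subseteq> module.span sc F)"

definition std_op_alg :: "('k::real_normed_field \<Rightarrow> 'v::real_normed_vector \<Rightarrow> 'v) \<Rightarrow> ('v \<Rightarrow> 'v) set \<Rightarrow> bool" where
  "std_op_alg sc A \<longleftrightarrow>
     A \<subseteq> {T. bop sc T} \<and> id \<in> A
     \<and> (\<forall>S\<in>A. \<forall>T\<in>A. (\<lambda>x. S x + T x) \<in> A \<and> S \<circ> T \<in> A)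
     \<and> (\<forall>c. \<forall>T\<in>A. (\<lambda>x. sc c (T x)) \<in> A)
     \<and> {T. finite_rank sc T} \<subseteq> A
     \<and> (\<forall>T Ts. (\<forall>n. Ts n \<in> A) \<and> bop sc T \<and> (\<lambda>n. onorm (\<lambda>x. Ts n x - T x)) \<longlonglongrightarrow> 0
              \<longrightarrow> T \<in> A)"

text \<open>2x2 operator matrices (elements of B(X) tensor M_2), indexed by bool.\<close>
type_synonym 'v mat2 = "bool \<Rightarrow> bool \<Rightarrow> 'v \<Rightarrow> 'v"

definition mat2_mult :: "'v::ab_group_add mat2 \<Rightarrow> 'v mat2 \<Rightarrow> 'v mat2" where
  "mat2_mult S T = (\<lambda>i j x. S i False (T False j x) + S i True (T True j x))"

definition mat2_shift :: "('k \<Rightarrow> 'v \<Rightarrow> 'v) \<Rightarrow> 'v::ab_group_add mat2 \<Rightarrow> 'k \<Rightarrow> 'v mat2" where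
  "mat2_shift sc T a = (\<lambda>i j x. T i j x - (if i = j then sc a x else 0))"

definition quadratic2 :: "('k \<Rightarrow> 'v \<Rightarrow> 'v) \<Rightarrow> 'v::ab_group_add mat2 \<Rightarrow> bool" where
  "quadratic2 sc T \<longleftrightarrow> (\<exists>a b. mat2_mult (mat2_shift sc T a) (mat2_shift sc T b) = (\<lambda>i j x. 0))"

end

(*
  For operators X, Y the block matrix [[X, Y], [X, Y]] is quadratic iff X + Y acts as one scalar
  on the ranges of X and Y, and [[X, Y], [0, 0]] is quadratic iff X does.  Both relations are
  therefore transported by the bijection.  For W with phi W = 0, the first relation holds for
  (W, Y) whenever it holds for (Y, Y); with Y = I this makes W a scalar, and with Y a rank-one
  idempotent the scalar must be 0, so phi 0 = 0.  The second relation with Y = I singles out the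
  scalars, so phi maps the scalars onto the scalars.

  A rank-one idempotent needs a nonzero bounded linear functional over the scalar field.  A real
  one comes from the Hahn-Banach extension argument (via Zorn's lemma); it can be complexified
  because a real normed field is R or C: every element a is a root of a real quadratic, since
  the minimum m of |a^2 + b a + c| over real b, c is attained and, by factoring real polynomials
  into linear and quadratic factors, persists when c is shifted by any e < m, which is
  impossible unless m = 0.
*)

theory Submission
  imports Defs "HOL-Computational_Algebra.Fundamental_Theorem_Algebra"
begin

section \<open>Quadratic operator matrices\<close>

definition scalar_on_ranges ::
    "('k::field \<Rightarrow> 'v::ab_group_add \<Rightarrow> 'v) \<Rightarrow> ('v \<Rightarrow> 'v) \<Rightarrow> ('v \<Rightarrow> 'v) \<Rightarrow> ('v \<Rightarrow> 'v) \<Rightarrow> bool" where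
  "scalar_on_ranges sc S X Y \<longleftrightarrow> (\<exists>c. \<forall>x. S (X x) = sc c (X x) \<and> S (Y x) = sc c (Y x))"

definition mat2_rows :: "('v \<Rightarrow> 'v) \<Rightarrow> ('v \<Rightarrow> 'v) \<Rightarrow> 'v mat2" where
  "mat2_rows X Y = (\<lambda>i j. if j then Y else X)"

definition mat2_top_row :: "('v \<Rightarrow> 'v) \<Rightarrow> ('v \<Rightarrow> 'v) \<Rightarrow> 'v::zero mat2" where
  "mat2_top_row X Y = (\<lambda>i j. if i then (\<lambda>x. 0) else if j then Y else X)"

lemma quadratic2_mat2_rows_iff:
  fixes sc :: "'k::field \<Rightarrow> 'v::ab_group_add \<Rightarrow> 'v"
  assumes "vector_space sc" and "Vector_Spaces.linear sc sc X" and "Vector_Spaces.linear sc sc Y"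
  shows "quadratic2 sc (mat2_rows X Y) \<longleftrightarrow> scalar_on_ranges sc (\<lambda>z. X z + Y z) X Y"
proof -
  interpret vector_space sc by fact
  interpret X: Vector_Spaces.linear sc sc X by fact
  interpret Y: Vector_Spaces.linear sc sc Y by fact
  let ?P = "\<lambda>a b. mat2_mult (mat2_shift sc (mat2_rows X Y) a) (mat2_shift sc (mat2_rows X Y) b)"
  have entry: "?P a b i j x = X (Z x) + Y (Z x) - sc (a + b) (Z x) + (if i = j then sc (a * b) x else 0)"
    if "Z = (if j then Y else X)" for a b i j x Z
    using that by (cases i; cases j)
      (simp_all add: mat2_mult_def mat2_shift_def mat2_rows_def X.diff Y.diff X.scale Y.scale
        algebra_simps scale_left_distrib)
  show ?thesis
  proof
    assume "quadratic2 sc (mat2_rows X Y)"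
    then obtain a b where "?P a b = (\<lambda>i j x. 0)" unfolding quadratic2_def by blast
    then have "?P a b True False x = 0" "?P a b False True x = 0" for x by simp_all
    then show "scalar_on_ranges sc (\<lambda>z. X z + Y z) X Y"
      unfolding scalar_on_ranges_def by (intro exI[of _ "a + b"]) (simp add: entry)
  next
    assume "scalar_on_ranges sc (\<lambda>z. X z + Y z) X Y"
    then obtain c where "\<And>x. X (X x) + Y (X x) = sc c (X x) \<and> X (Y x) + Y (Y x) = sc c (Y x)"
      unfolding scalar_on_ranges_def by blast
    then have "?P c 0 = (\<lambda>i j x. 0)" by (intro ext) (simp add: entry)
    then show "quadratic2 sc (mat2_rows X Y)" unfolding quadratic2_def by blast
  qed
qed

lemma quadratic2_mat2_top_row_iff:
  fixes sc :: "'k::field \<Rightarrow> 'v::ab_group_add \<Rightarrow> 'v"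
  assumes "vector_space sc" and "Vector_Spaces.linear sc sc X" and "Vector_Spaces.linear sc sc Y"
    and "(v::'v) \<noteq> 0"
  shows "quadratic2 sc (mat2_top_row X Y) \<longleftrightarrow> scalar_on_ranges sc X X Y"
proof -
  interpret vector_space sc by fact
  interpret X: Vector_Spaces.linear sc sc X by fact
  interpret Y: Vector_Spaces.linear sc sc Y by fact
  let ?P = "\<lambda>a b. mat2_mult (mat2_shift sc (mat2_top_row X Y) a) (mat2_shift sc (mat2_top_row X Y) b)"
  have bottom: "?P a b True j x = (if j then sc (a * b) x else 0)" for a b j x
    by (simp add: mat2_mult_def mat2_shift_def mat2_top_row_def)
  have top: "?P a b False j x = X (Z x) - sc (a + b) (Z x) + (if j then 0 else sc (a * b) x)"
    if "Z = (if j then Y else X)" for a b j x Z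
    using that by (cases j)
      (simp_all add: mat2_mult_def mat2_shift_def mat2_top_row_def X.diff X.scale Y.neg Y.scale Y.zero
        algebra_simps scale_left_distrib)
  show ?thesis
  proof
    assume "quadratic2 sc (mat2_top_row X Y)"
    then obtain a b where P0: "?P a b = (\<lambda>i j x. 0)" unfolding quadratic2_def by blast
    then have "sc (a * b) v = 0" using bottom[of a b True v] by simp
    then have ab: "a * b = 0" using \<open>v \<noteq> 0\<close> by simp
    have "?P a b False False x = 0" "?P a b False True x = 0" for x using P0 by simp_all
    then show "scalar_on_ranges sc X X Y"
      unfolding scalar_on_ranges_def by (intro exI[of _ "a + b"]) (simp add: top ab)
  next
    assume "scalar_on_ranges sc X X Y"
    then obtain c where c: "\<And>x. X (X x) = sc c (X x) \<and> X (Y x) = sc c (Y x)"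
      unfolding scalar_on_ranges_def by blast
    have "?P c 0 i j x = 0" for i j x by (cases i) (simp_all add: top bottom c)
    then have "?P c 0 = (\<lambda>i j x. 0)" by blast
    then show "quadratic2 sc (mat2_top_row X Y)" unfolding quadratic2_def by blast
  qed
qed

lemma scalar_on_ranges_zero_left:
  assumes "Vector_Spaces.linear sc sc Z"
  shows "scalar_on_ranges sc (\<lambda>z. 0 + Z z) (\<lambda>x. 0) Z \<longleftrightarrow> scalar_on_ranges sc Z Z Z"
proof -
  interpret Z: Vector_Spaces.linear sc sc Z by fact
  show ?thesis by (simp add: scalar_on_ranges_def)
qed

lemma scalar_on_ranges_double:
  assumes "vector_space (sc :: 'k::field_char_0 \<Rightarrow> 'v::ab_group_add \<Rightarrow> 'v)"
  shows "scalar_on_ranges sc (\<lambda>z. Z z + Z z) Z Z \<longleftrightarrow> scalar_on_ranges sc Z Z Z"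
proof -
  interpret vector_space sc by fact
  have halve: "y + y = sc c z \<longleftrightarrow> y = sc (c / 2) z" for y z c
  proof -
    have "y + y = sc 2 y" using scale_left_distrib[of 1 1 y] by simp
    moreover have "sc 2 y = sc c z \<longleftrightarrow> sc (1 / 2) (sc 2 y) = sc (1 / 2) (sc c z)"
      by (metis scale_cancel_left zero_neq_numeral divide_eq_0_iff one_neq_zero)
    ultimately show ?thesis by simp
  qed
  show ?thesis unfolding scalar_on_ranges_def
  proof
    assume "\<exists>c. \<forall>x. Z (Z x) + Z (Z x) = sc c (Z x) \<and> Z (Z x) + Z (Z x) = sc c (Z x)"
    then show "\<exists>c. \<forall>x. Z (Z x) = sc c (Z x) \<and> Z (Z x) = sc c (Z x)" by (auto simp: halve)
  next
    assume "\<exists>c. \<forall>x. Z (Z x) = sc c (Z x) \<and> Z (Z x) = sc c (Z x)"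
    then obtain c where "\<forall>x. Z (Z x) = sc c (Z x)" by blast
    then have "\<forall>x. Z (Z x) + Z (Z x) = sc (2 * c) (Z x)" by (simp add: halve)
    then show "\<exists>c. \<forall>x. Z (Z x) + Z (Z x) = sc c (Z x) \<and> Z (Z x) + Z (Z x) = sc c (Z x)" by blast
  qed
qed

lemma scalar_on_ranges_scalar: "scalar_on_ranges sc (\<lambda>x. sc c x) (\<lambda>x. sc c x) Y"
  unfolding scalar_on_ranges_def by blast

lemma scalar_on_ranges_id_imp_scalar: "scalar_on_ranges sc X X id \<Longrightarrow> \<exists>c. X = (\<lambda>x. sc c x)"
  unfolding scalar_on_ranges_def by auto

section \<open>A norming functional\<close>

definition dominated_graph :: "'a::real_normed_vector \<Rightarrow> ('a \<times> real) set \<Rightarrow> bool" where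
  "dominated_graph v G \<longleftrightarrow> (\<forall>x y z. (x, y) \<in> G \<longrightarrow> (x, z) \<in> G \<longrightarrow> y = z)
    \<and> (\<forall>x y x' y'. (x, y) \<in> G \<longrightarrow> (x', y') \<in> G \<longrightarrow> (x + x', y + y') \<in> G)
    \<and> (\<forall>x y r. (x, y) \<in> G \<longrightarrow> (r *\<^sub>R x, r * y) \<in> G)
    \<and> (\<forall>x y. (x, y) \<in> G \<longrightarrow> y \<le> norm x)
    \<and> (v, norm v) \<in> G"

lemma dominated_graphD:
  assumes "dominated_graph v G"
  shows dominated_graph_unique: "(x, y) \<in> G \<Longrightarrow> (x, z) \<in> G \<Longrightarrow> y = z"
    and dominated_graph_add: "(x, y) \<in> G \<Longrightarrow> (x', y') \<in> G \<Longrightarrow> (x + x', y + y') \<in> G"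
    and dominated_graph_scaleR: "(x, y) \<in> G \<Longrightarrow> (r *\<^sub>R x, r * y) \<in> G"
    and dominated_graph_le_norm: "(x, y) \<in> G \<Longrightarrow> y \<le> norm x"
    and dominated_graph_base: "(v, norm v) \<in> G"
  using assms unfolding dominated_graph_def by blast+

lemma dominated_graph_line:
  assumes "v \<noteq> 0"
  shows "dominated_graph v {(r *\<^sub>R v, r * norm v) | r. True}" (is "dominated_graph v ?L")
  unfolding dominated_graph_def
proof (intro conjI allI impI)
  fix x y z assume "(x, y) \<in> ?L" "(x, z) \<in> ?L"
  then show "y = z" using assms by (auto simp: scaleR_cancel_right)
next
  fix x y x' y' assume "(x, y) \<in> ?L" "(x', y') \<in> ?L"
  then obtain r r' where "x = r *\<^sub>R v" "y = r * norm v" "x' = r' *\<^sub>R v" "y' = r' * norm v" by blast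
  then show "(x + x', y + y') \<in> ?L"
    by (intro CollectI exI[of _ "r + r'"]) (simp add: scaleR_add_left algebra_simps)
next
  fix x y s assume "(x, y) \<in> ?L"
  then obtain r where "x = r *\<^sub>R v" "y = r * norm v" by blast
  then show "(s *\<^sub>R x, s * y) \<in> ?L" by (intro CollectI exI[of _ "s * r"]) simp
next
  fix x y assume "(x, y) \<in> ?L"
  then show "y \<le> norm x" by (auto simp: mult_right_mono)
next
  show "(v, norm v) \<in> ?L" by (intro CollectI exI[of _ 1]) simp
qed

lemma dominated_graph_Union_chain:
  assumes C: "C \<in> chains {G. dominated_graph v G}" and "C \<noteq> {}"
  shows "dominated_graph v (\<Union>C)"
proof -
  have dom: "dominated_graph v G" if "G \<in> C" for G using C that chainsD2 by blast
  have common: "\<exists>G\<in>C. p \<in> G \<and> q \<in> G" if "p \<in> \<Union>C" "q \<in> \<Union>C" for p q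
    using that chainsD[OF C] by blast
  from \<open>C \<noteq> {}\<close> obtain G0 where "G0 \<in> C" by blast
  then show ?thesis
    unfolding dominated_graph_def
    using common dom dominated_graphD by (smt (verit) UnionE UnionI)
qed

lemma dominated_graph_extension_value:
  assumes M: "dominated_graph v M"
  shows "\<exists>t. \<forall>(a, b)\<in>M. b + t \<le> norm (a + w) \<and> b - t \<le> norm (a - w)"
proof -
  let ?S = "(\<lambda>(a, b). b - norm (a - w)) ` M"
  have below: "s \<le> norm (a' + w) - b'" if "s \<in> ?S" "(a', b') \<in> M" for s a' b'
  proof -
    obtain a b where ab: "(a, b) \<in> M" "s = b - norm (a - w)" using \<open>s \<in> ?S\<close> by auto
    have "b + b' \<le> norm (a + a')"
      using dominated_graph_le_norm[OF M dominated_graph_add[OF M ab(1) that(2)]] .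
    also have "\<dots> \<le> norm (a - w) + norm (a' + w)"
      using norm_triangle_ineq[of "a - w" "a' + w"] by simp
    finally show ?thesis using ab by simp
  qed
  have "(0, 0) \<in> M" using dominated_graph_scaleR[OF M dominated_graph_base[OF M], of 0] by simp
  then have "?S \<noteq> {}" and "bdd_above ?S" using below by (auto intro!: bdd_aboveI)
  then have "b - norm (a - w) \<le> Sup ?S" "Sup ?S \<le> norm (a + w) - b" if "(a, b) \<in> M" for a b
    using that below by (force intro: cSup_upper cSup_least)+
  then show ?thesis by (intro exI[of _ "Sup ?S"]) (fastforce simp: algebra_simps)
qed

lemma dominated_graph_scaled_bound:
  assumes M: "dominated_graph v M" and bound: "\<And>a b. (a, b) \<in> M \<Longrightarrow> b + t \<le> norm (a + w)"
    and "(x, y) \<in> M" and "s > 0"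
  shows "y + s * t \<le> norm (x + s *\<^sub>R w)"
proof -
  have "y / s + t \<le> norm ((1 / s) *\<^sub>R x + w)"
    using bound[OF dominated_graph_scaleR[OF M \<open>(x, y) \<in> M\<close>, of "1 / s"]] by simp
  then have "s * (y / s + t) \<le> s * norm ((1 / s) *\<^sub>R x + w)"
    using \<open>s > 0\<close> by (simp add: mult_left_mono)
  also have "\<dots> = norm (s *\<^sub>R ((1 / s) *\<^sub>R x + w))" using \<open>s > 0\<close> by simp
  also have "\<dots> = norm (x + s *\<^sub>R w)" using \<open>s > 0\<close> by (simp add: scaleR_add_right)
  finally show ?thesis using \<open>s > 0\<close> by (simp add: algebra_simps)
qed

lemma dominated_graph_extension_coeff_unique:
  assumes M: "dominated_graph v M" and w: "w \<notin> fst ` M"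
    and "(x1, y1) \<in> M" "(x2, y2) \<in> M" and eq: "x1 + r1 *\<^sub>R w = x2 + r2 *\<^sub>R w"
  shows "r1 = r2"
proof (rule ccontr)
  assume "r1 \<noteq> r2"
  have "(x2 - x1, y2 - y1) \<in> M"
    using dominated_graph_add[OF M \<open>(x2, y2) \<in> M\<close> dominated_graph_scaleR[OF M \<open>(x1, y1) \<in> M\<close>, of "-1"]]
    by simp
  from dominated_graph_scaleR[OF M this, of "1 / (r1 - r2)"]
  have "(1 / (r1 - r2)) *\<^sub>R (x2 - x1) \<in> fst ` M" by force
  moreover have "x2 - x1 = (r1 - r2) *\<^sub>R w" using eq by (simp add: algebra_simps)
  then have "(1 / (r1 - r2)) *\<^sub>R (x2 - x1) = w" using \<open>r1 \<noteq> r2\<close> by simp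
  ultimately show False using w by simp
qed

lemma dominated_graph_extend:
  assumes M: "dominated_graph v M" and w: "w \<notin> fst ` M"
    and t: "\<And>a b. (a, b) \<in> M \<Longrightarrow> b + t \<le> norm (a + w) \<and> b - t \<le> norm (a - w)"
  shows "dominated_graph v {(x + r *\<^sub>R w, y + r * t) | x y r. (x, y) \<in> M}" (is "dominated_graph v ?M'")
  unfolding dominated_graph_def
proof (intro conjI allI impI)
  fix p y z assume "(p, y) \<in> ?M'" "(p, z) \<in> ?M'"
  then obtain x1 y1 r1 x2 y2 r2 where e: "(x1, y1) \<in> M" "p = x1 + r1 *\<^sub>R w" "y = y1 + r1 * t"
    "(x2, y2) \<in> M" "p = x2 + r2 *\<^sub>R w" "z = y2 + r2 * t" by blast
  then have "r1 = r2" using dominated_graph_extension_coeff_unique[OF M w] by metis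
  then show "y = z" using e dominated_graph_unique[OF M] by simp
next
  fix p y p' y' assume "(p, y) \<in> ?M'" "(p', y') \<in> ?M'"
  then obtain x1 y1 r1 x2 y2 r2 where e: "(x1, y1) \<in> M" "p = x1 + r1 *\<^sub>R w" "y = y1 + r1 * t"
    "(x2, y2) \<in> M" "p' = x2 + r2 *\<^sub>R w" "y' = y2 + r2 * t" by blast
  then show "(p + p', y + y') \<in> ?M'"
    using dominated_graph_add[OF M e(1,4)]
    by (intro CollectI exI[of _ "x1 + x2"] exI[of _ "y1 + y2"] exI[of _ "r1 + r2"])
      (simp add: algebra_simps scaleR_add_left)
next
  fix p y s assume "(p, y) \<in> ?M'"
  then obtain x1 y1 r1 where e: "(x1, y1) \<in> M" "p = x1 + r1 *\<^sub>R w" "y = y1 + r1 * t" by blast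
  then show "(s *\<^sub>R p, s * y) \<in> ?M'"
    using dominated_graph_scaleR[OF M e(1), of s]
    by (intro CollectI exI[of _ "s *\<^sub>R x1"] exI[of _ "s * y1"] exI[of _ "s * r1"])
      (simp add: algebra_simps scaleR_add_right)
next
  fix p y assume "(p, y) \<in> ?M'"
  then obtain x y1 r where e: "(x, y1) \<in> M" "p = x + r *\<^sub>R w" "y = y1 + r * t" by blast
  consider "r = 0" | "r > 0" | "r < 0" by linarith
  then show "y \<le> norm p"
  proof cases
    case 1 then show ?thesis using dominated_graph_le_norm[OF M e(1)] e by simp
  next
    case 2 then show ?thesis using dominated_graph_scaled_bound[OF M _ e(1), of t w r] t e by simp
  next
    \<comment> \<open>the lower bound for \<open>t\<close> is the upper bound for \<open>-t\<close> in direction \<open>-w\<close>\<close>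
    case 3 then show ?thesis using dominated_graph_scaled_bound[OF M _ e(1), of "-t" "-w" "-r"] t e by simp
  qed
next
  show "(v, norm v) \<in> ?M'" using dominated_graph_base[OF M] by force
qed

lemma dominated_graph_maximal_total:
  assumes M: "dominated_graph v M" and max: "\<And>G. dominated_graph v G \<Longrightarrow> M \<subseteq> G \<Longrightarrow> G = M"
  shows "\<exists>y. (x, y) \<in> M"
proof (rule ccontr)
  assume "\<nexists>y. (x, y) \<in> M"
  then have x: "x \<notin> fst ` M" by force
  obtain t where t: "\<forall>(a, b)\<in>M. b + t \<le> norm (a + x) \<and> b - t \<le> norm (a - x)"
    using dominated_graph_extension_value[OF M] by blast
  let ?M' = "{(a + r *\<^sub>R x, b + r * t) | a b r. (a, b) \<in> M}"
  have "dominated_graph v ?M'" using dominated_graph_extend[OF M x] t by blast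
  moreover have "(a + 0 *\<^sub>R x, b + 0 * t) \<in> ?M'" if "(a, b) \<in> M" for a b
    using that by blast
  then have "M \<subseteq> ?M'" by auto
  moreover have "(0 + 1 *\<^sub>R x, 0 + 1 * t) \<in> ?M'"
    using dominated_graph_scaleR[OF M dominated_graph_base[OF M], of 0] by fastforce
  then have "(x, t) \<in> ?M'" by simp
  ultimately have "(x, t) \<in> M" using max by blast
  then show False using x by force
qed

theorem real_norming_functional:
  fixes v :: "'a::real_normed_vector"
  assumes "v \<noteq> 0"
  shows "\<exists>g::'a \<Rightarrow> real. linear g \<and> (\<forall>x. \<bar>g x\<bar> \<le> norm x) \<and> g v = norm v"
proof -
  have "\<forall>C\<in>chains {G. dominated_graph v G}. \<exists>U\<in>{G. dominated_graph v G}. \<forall>G\<in>C. G \<subseteq> U"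
  proof
    fix C assume C: "C \<in> chains {G. dominated_graph v G}"
    show "\<exists>U\<in>{G. dominated_graph v G}. \<forall>G\<in>C. G \<subseteq> U"
    proof (cases "C = {}")
      case True then show ?thesis using dominated_graph_line[OF assms] by blast
    next
      case False then show ?thesis using dominated_graph_Union_chain[OF C] by blast
    qed
  qed
  from Zorn_Lemma2[OF this] obtain M where M: "dominated_graph v M"
    and max: "\<And>G. dominated_graph v G \<Longrightarrow> M \<subseteq> G \<Longrightarrow> G = M"
    by blast
  define g where "g x = (THE y. (x, y) \<in> M)" for x
  have graph: "(x, g x) \<in> M" for x
    unfolding g_def using dominated_graph_maximal_total[OF M max, of x] dominated_graph_unique[OF M]
    by (metis theI)
  have g_eq: "g x = y" if "(x, y) \<in> M" for x y using dominated_graph_unique[OF M graph that] .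
  have "linear g"
  proof
    show "g (x + y) = g x + g y" for x y using g_eq[OF dominated_graph_add[OF M graph graph]] .
    show "g (r *\<^sub>R x) = r *\<^sub>R g x" for r x using g_eq[OF dominated_graph_scaleR[OF M graph]] by simp
  qed
  moreover have "\<bar>g x\<bar> \<le> norm x" for x
    using dominated_graph_le_norm[OF M graph[of x]]
      dominated_graph_le_norm[OF M dominated_graph_scaleR[OF M graph[of x], of "-1"]] by simp
  moreover have "g v = norm v" using g_eq[OF dominated_graph_base[OF M]] .
  ultimately show ?thesis by blast
qed

section \<open>Real normed fields are \<open>\<real>\<close> or \<open>\<complex>\<close>\<close>

abbreviation of_real_poly :: "real poly \<Rightarrow> 'a::real_algebra_1 poly" where
  "of_real_poly p \<equiv> map_poly of_real p"

lemma of_real_poly_add: "of_real_poly (p + q) = (of_real_poly p + of_real_poly q :: 'a::real_algebra_1 poly)"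
  by (rule poly_eqI) (simp add: coeff_map_poly)

lemma of_real_poly_mult:
  "of_real_poly (p * q) = (of_real_poly p * of_real_poly q :: 'a::{real_algebra_1,comm_ring_1} poly)"
  by (rule poly_eqI) (simp add: coeff_map_poly coeff_mult of_real_sum)

lemma poly_of_real_poly_of_real:
  "poly (of_real_poly p) (of_real x :: 'a::{real_algebra_1,comm_ring_1}) = of_real (poly p x)"
  by (induction p) (auto simp: map_poly_pCons)

lemma degree_of_real_poly: "degree (of_real_poly p :: 'a::real_algebra_1 poly) = degree p"
  by (rule degree_map_poly) simp

lemma of_real_poly_eq_0_iff: "(of_real_poly p :: 'a::real_algebra_1 poly) = 0 \<longleftrightarrow> p = 0"
  by (rule map_poly_eq_0_iff) auto

lemma of_real_poly_dvd_imp_dvd: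
  assumes "(of_real_poly D :: 'a::{real_algebra_1,idom} poly) dvd of_real_poly P"
  shows "D dvd P"
proof (cases "D = 0")
  case True then show ?thesis using assms by (simp add: of_real_poly_eq_0_iff)
next
  case False
  define R where "R = P mod D"
  obtain E :: "'a poly" where E: "of_real_poly P = of_real_poly D * E" using assms by (elim dvdE)
  have "P = D * (P div D) + R" unfolding R_def by simp
  then have "of_real_poly R = (of_real_poly D * (E - of_real_poly (P div D)) :: 'a poly)"
    using E by (metis of_real_poly_add of_real_poly_mult add_diff_cancel_left' right_diff_distrib)
  moreover have "degree R < degree D \<or> R = 0"
    unfolding R_def using degree_mod_less[OF False, of P] by blast
  ultimately have "R = 0"
    using False by (metis degree_mult_eq degree_of_real_poly le_add1 leD mult_eq_0_iff of_real_poly_eq_0_iff)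
  then show ?thesis unfolding R_def by (simp add: mod_eq_0_iff_dvd)
qed

lemma real_poly_nonreal_root_quadratic_factor:
  fixes P :: "real poly" and z :: complex
  assumes root: "poly (of_real_poly P) z = 0" and "Im z \<noteq> 0"
  shows "[:(cmod z)\<^sup>2, -2 * Re z, 1:] dvd P"
proof (rule of_real_poly_dvd_imp_dvd[where 'a = complex])
  let ?P = "of_real_poly P :: complex poly"
  have "map_poly cnj ?P = ?P" by (rule poly_eqI) (simp add: coeff_map_poly)
  then have root': "poly ?P (cnj z) = 0" using poly_map_poly_cnj[of ?P "cnj z"] root by simp
  obtain Q where Q: "?P = [:-z, 1:] * Q" using root poly_eq_0_iff_dvd by (metis dvdE)
  have "poly Q (cnj z) = 0" using root' Q \<open>Im z \<noteq> 0\<close> by (simp add: complex_eq_iff)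
  then obtain Q' where "Q = [:-cnj z, 1:] * Q'" using poly_eq_0_iff_dvd by (metis dvdE)
  moreover have "cmod z * cmod z = Im z * Im z + Re z * Re z"
    using cmod_power2[of z] by (simp add: power2_eq_square)
  then have "of_real_poly [:(cmod z)\<^sup>2, -2 * Re z, 1:] = [:-z, 1:] * [:-cnj z, 1:]"
    by (simp add: map_poly_pCons complex_eq_iff power2_eq_square algebra_simps)
  ultimately show "of_real_poly [:(cmod z)\<^sup>2, -2 * Re z, 1:] dvd ?P"
    using Q by (metis dvd_triv_left mult.assoc)
qed

lemma real_poly_root_or_quadratic_factor:
  fixes P :: "real poly"
  assumes "degree P \<ge> 1"
  shows "(\<exists>r. poly P r = 0) \<or> (\<exists>\<beta> \<gamma>. \<beta>\<^sup>2 < 4 * \<gamma> \<and> [:\<gamma>, \<beta>, 1:] dvd P)"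
proof -
  have "\<not> constant (poly (of_real_poly P :: complex poly))"
    using assms by (simp add: constant_degree degree_of_real_poly)
  then obtain z :: complex where z: "poly (of_real_poly P) z = 0"
    using fundamental_theorem_of_algebra by blast
  show ?thesis
  proof (cases "Im z = 0")
    case True
    then have "z = of_real (Re z)" by (simp add: complex_eq_iff)
    then have "of_real (poly P (Re z)) = (0::complex)" using z poly_of_real_poly_of_real by metis
    then show ?thesis by auto
  next
    case False
    have "cmod z * cmod z = Im z * Im z + Re z * Re z"
      using cmod_power2[of z] by (simp add: power2_eq_square)
    then have "(-2 * Re z)\<^sup>2 < 4 * (cmod z)\<^sup>2"
      using False by (simp add: power2_eq_square) (simp add: not_square_less_zero less_le)
    then show ?thesis using real_poly_nonreal_root_quadratic_factor[OF z False] by blast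
  qed
qed

lemma biquadratic_factor:
  fixes p u W d b g :: "'a::comm_ring_1"
  assumes "4 * u * u = 2 * W - 2 * d - b" and "W * W = d * d + b * d + g"
  shows "(p * p + d) * (p * p + d) + b * (p * p + d) + g
    = (p * p - 2 * u * p + W) * (p * p + 2 * u * p + W)"
proof -
  have "2 * W - 4 * u * u = 2 * W - (2 * W - 2 * d - b)" by (simp only: assms(1))
  then have coeff: "2 * W - 4 * u * u = 2 * d + b" by (simp add: algebra_simps)
  have "(p * p - 2 * u * p + W) * (p * p + 2 * u * p + W)
      = (p * p) * (p * p) + (2 * W - 4 * u * u) * (p * p) + W * W"
    by (simp add: algebra_simps)
  also have "\<dots> = (p * p) * (p * p) + (2 * d + b) * (p * p) + (d * d + b * d + g)"
    by (simp only: coeff assms(2))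
  also have "\<dots> = (p * p + d) * (p * p + d) + b * (p * p + d) + g" by (simp add: algebra_simps)
  finally show ?thesis by simp
qed

lemma geometric_quotient_poly:
  fixes Y :: "'a::{real_algebra_1,comm_ring_1}"
  shows "\<exists>P. lead_coeff P = 1 \<and> degree P = n
    \<and> poly (of_real_poly P) Y * (Y - of_real e) = Y ^ Suc n - of_real e ^ Suc n"
proof (induction n)
  case 0
  show ?case by (intro exI[of _ 1]) simp
next
  case (Suc n)
  then obtain P where P: "lead_coeff P = 1" "degree P = n"
    "poly (of_real_poly P) Y * (Y - of_real e) = Y ^ Suc n - of_real e ^ Suc n"
    by blast
  then have "P \<noteq> 0" by auto
  define P' where "P' = pCons (e ^ Suc n) P"
  have "poly (of_real_poly P') Y * (Y - of_real e)
      = of_real (e ^ Suc n) * (Y - of_real e) + Y * (poly (of_real_poly P) Y * (Y - of_real e))"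
    unfolding P'_def by (simp add: map_poly_pCons algebra_simps)
  also have "\<dots> = of_real (e ^ Suc n) * (Y - of_real e) + Y * (Y ^ Suc n - of_real e ^ Suc n)"
    using P(3) by simp
  also have "\<dots> = Y ^ Suc (Suc n) - of_real e ^ Suc (Suc n)" by (simp add: algebra_simps)
  finally show ?case using P \<open>P \<noteq> 0\<close> by (intro exI[of _ P']) (simp add: P'_def)
qed

lemma real_biquadratic_factor_coeffs:
  fixes \<beta> \<gamma> d :: real
  assumes "\<beta>\<^sup>2 < 4 * \<gamma>"
  shows "\<exists>u W. 4 * u * u = 2 * W - 2 * d - \<beta> \<and> W * W = d * d + \<beta> * d + \<gamma>"
proof -
  have sq: "(d + \<beta> / 2)\<^sup>2 \<le> d * d + \<beta> * d + \<gamma>"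
    using assms by (simp add: power2_eq_square algebra_simps)
  define W where "W = sqrt (d * d + \<beta> * d + \<gamma>)"
  have "0 \<le> d * d + \<beta> * d + \<gamma>" using sq by (meson order_trans zero_le_power2)
  then have W2: "W * W = d * d + \<beta> * d + \<gamma>" unfolding W_def by simp
  have "d + \<beta> / 2 \<le> W" unfolding W_def using real_sqrt_le_mono[OF sq] by simp
  then have "4 * sqrt ((2 * W - 2 * d - \<beta>) / 4) * sqrt ((2 * W - 2 * d - \<beta>) / 4) = 2 * W - 2 * d - \<beta>"
    by (simp add: mult.assoc)
  with W2 show ?thesis by blast
qed

locale quadratic_norm_min =
  fixes a :: "'k::real_normed_field" and m :: real
  assumes norm_ge_min: "\<And>b c. m \<le> norm (a * a + of_real b * a + of_real c)"
    and min_nonneg: "0 \<le> m"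
begin

definition quad :: "real \<Rightarrow> real \<Rightarrow> 'k" where "quad b c = a * a + of_real b * a + of_real c"

lemma norm_quad_ge: "m \<le> norm (quad b c)" unfolding quad_def by (rule norm_ge_min)

lemma norm_quadratic_of_quad_ge:
  assumes "\<beta>\<^sup>2 < 4 * \<gamma>"
  shows "m * m \<le> norm (quad b c * quad b c + of_real \<beta> * quad b c + of_real \<gamma>)"
proof -
  define s where "s = b / 2"
  define p where "p = a + of_real s"
  define d where "d = c - s * s"
  have Y: "quad b c = p * p + of_real d"
    unfolding quad_def p_def d_def s_def by (simp add: algebra_simps)
  obtain u W where u: "4 * u * u = 2 * W - 2 * d - \<beta>" and W: "W * W = d * d + \<beta> * d + \<gamma>"
    using real_biquadratic_factor_coeffs[OF assms] by blast
  \<comment> \<open>both factors are again of the form \<open>quad b' c'\<close>\<close>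
  have "quad b c * quad b c + of_real \<beta> * quad b c + of_real \<gamma>
      = (p * p - 2 * of_real u * p + of_real W) * (p * p + 2 * of_real u * p + of_real W)"
    unfolding Y
  proof (rule biquadratic_factor)
    show "4 * of_real u * of_real u = 2 * of_real W - 2 * of_real d - (of_real \<beta> :: 'k)"
      using arg_cong[OF u, of "of_real :: real \<Rightarrow> 'k"] by simp
    show "of_real W * of_real W = of_real d * of_real d + of_real \<beta> * of_real d + (of_real \<gamma> :: 'k)"
      using arg_cong[OF W, of "of_real :: real \<Rightarrow> 'k"] by simp
  qed
  also have "\<dots> = quad (b - 2 * u) (s * s - 2 * u * s + W) * quad (b + 2 * u) (s * s + 2 * u * s + W)"
    unfolding quad_def p_def s_def by (simp add: algebra_simps)
  finally show ?thesis
    using norm_quad_ge min_nonneg by (simp add: norm_mult mult_mono)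
qed

lemma norm_poly_of_quad_mult:
  assumes "m ^ degree D \<le> norm (poly (of_real_poly D) (quad b c))"
    and "m ^ degree E \<le> norm (poly (of_real_poly E) (quad b c))"
    and "D \<noteq> 0" and "E \<noteq> 0"
  shows "m ^ degree (D * E) \<le> norm (poly (of_real_poly (D * E)) (quad b c))"
proof -
  have "m ^ degree D * m ^ degree E \<le> norm (poly (of_real_poly D) (quad b c)) * norm (poly (of_real_poly E) (quad b c))"
    using assms(1,2) min_nonneg by (intro mult_mono) auto
  then show ?thesis
    using assms(3,4) by (simp add: degree_mult_eq power_add of_real_poly_mult norm_mult)
qed

lemma norm_monic_poly_of_quad_ge:
  assumes "lead_coeff P = 1"
  shows "m ^ degree P \<le> norm (poly (of_real_poly P) (quad b c))"
  using assms
proof (induction "degree P" arbitrary: P rule: less_induct)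
  case less
  let ?Y = "quad b c"
  have "P \<noteq> 0" using less.prems by auto
  have factor: "m ^ degree P \<le> norm (poly (of_real_poly P) ?Y)"
    if P: "P = D * E" and "lead_coeff D = 1" and "degree D > 0"
      and D: "m ^ degree D \<le> norm (poly (of_real_poly D) ?Y)" for D E
  proof -
    have "D \<noteq> 0" "E \<noteq> 0" using \<open>P \<noteq> 0\<close> P by auto
    then have "degree P = degree D + degree E" using P degree_mult_eq by blast
    moreover have "lead_coeff E = 1" using less.prems P \<open>lead_coeff D = 1\<close> by (simp add: lead_coeff_mult)
    ultimately have "m ^ degree E \<le> norm (poly (of_real_poly E) ?Y)"
      using less.hyps[of E] \<open>degree D > 0\<close> by simp
    then show ?thesis using norm_poly_of_quad_mult[OF D] \<open>D \<noteq> 0\<close> \<open>E \<noteq> 0\<close> P by blast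
  qed
  show ?case
  proof (cases "degree P = 0")
    case True
    then have "P = 1" using less.prems degree_0_id[OF True] by (simp add: one_pCons)
    then show ?thesis by simp
  next
    case False
    with real_poly_root_or_quadratic_factor[of P]
    consider (root) r where "poly P r = 0" | (quadratic) \<beta> \<gamma> where "\<beta>\<^sup>2 < 4 * \<gamma>" "[:\<gamma>, \<beta>, 1:] dvd P"
      by auto
    then show ?thesis
    proof cases
      case root
      then obtain E where PE: "P = [:-r, 1:] * E" using poly_eq_0_iff_dvd by (metis dvdE)
      have "poly (of_real_poly [:-r, 1:]) ?Y = quad b (c - r)"
        by (simp add: map_poly_pCons quad_def algebra_simps)
      then have "m ^ degree [:-r, 1::real:] \<le> norm (poly (of_real_poly [:-r, 1:]) ?Y)"
        using norm_quad_ge by simp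
      from factor[OF PE _ _ this] show ?thesis by simp
    next
      case quadratic
      then obtain E where PE: "P = [:\<gamma>, \<beta>, 1:] * E" by (metis dvdE)
      have "poly (of_real_poly [:\<gamma>, \<beta>, 1:]) ?Y = ?Y * ?Y + of_real \<beta> * ?Y + of_real \<gamma>"
        by (simp add: map_poly_pCons algebra_simps)
      then have "m ^ degree [:\<gamma>, \<beta>, 1::real:] \<le> norm (poly (of_real_poly [:\<gamma>, \<beta>, 1:]) ?Y)"
        using norm_quadratic_of_quad_ge[OF quadratic(1), of b c] by (simp add: power2_eq_square)
      from factor[OF PE _ _ this] show ?thesis by simp
    qed
  qed
qed

text \<open>For \<open>Y = quad b c\<close>, the quotient \<open>(Y^(n+1) - e^(n+1)) / (Y - e)\<close> is a monic real polynomial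
  in \<open>Y\<close>, so its norm is at least \<open>m^n\<close>; letting \<open>n \<rightarrow> \<infinity>\<close> gives \<open>norm (Y - e) \<le> m\<close>.\<close>

lemma norm_quad_shift:
  assumes Y: "norm (quad b c) = m" and e: "0 < e" "e < m"
  shows "norm (quad b (c - e)) = m"
proof -
  let ?Y = "quad b c"
  have qe: "quad b (c - e) = ?Y - of_real e" unfolding quad_def by simp
  have mpos: "m > 0" using e by simp
  have bnd: "norm (?Y - of_real e) \<le> m + e * (e / m) ^ n" for n
  proof -
    obtain P where P: "lead_coeff P = 1" "degree P = n"
      "poly (of_real_poly P) ?Y * (?Y - of_real e) = ?Y ^ Suc n - of_real e ^ Suc n"
      using geometric_quotient_poly by blast
    have "m ^ n * norm (?Y - of_real e) \<le> norm (poly (of_real_poly P) ?Y) * norm (?Y - of_real e)"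
      using norm_monic_poly_of_quad_ge[OF P(1), of b c] P(2) by (intro mult_right_mono) auto
    also have "\<dots> = norm (?Y ^ Suc n - of_real e ^ Suc n)" by (simp only: norm_mult[symmetric] P(3))
    also have "\<dots> \<le> norm (?Y ^ Suc n) + norm (of_real e ^ Suc n :: 'k)" by (rule norm_triangle_ineq4)
    also have "\<dots> = m ^ Suc n + e ^ Suc n"
    proof -
      have "norm (?Y ^ Suc n) = m ^ Suc n" by (simp only: norm_power Y)
      moreover have "norm (of_real e ^ Suc n :: 'k) = e ^ Suc n"
        using e by (simp only: norm_power norm_of_real abs_of_pos)
      ultimately show ?thesis by simp
    qed
    finally have "m ^ n * norm (?Y - of_real e) \<le> m ^ Suc n + e ^ Suc n" .
    then have "norm (?Y - of_real e) \<le> (m ^ Suc n + e ^ Suc n) / m ^ n"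
      using mpos by (simp add: field_simps mult.commute)
    also have "\<dots> = m + e * (e / m) ^ n" using mpos by (simp add: field_simps power_divide)
    finally show ?thesis .
  qed
  have lim: "(\<lambda>n. m + e * (e / m) ^ n) \<longlonglongrightarrow> m + e * 0"
    using e by (intro tendsto_intros) (simp add: divide_less_cancel)
  have "norm (?Y - of_real e) \<le> m" using LIMSEQ_le_const[OF lim] bnd by simp
  moreover have "m \<le> norm (?Y - of_real e)" using norm_quad_ge[of b "c - e"] qe by simp
  ultimately show ?thesis using qe by simp
qed

text \<open>Shifting \<open>c\<close> by \<open>m / 2\<close> keeps the norm at \<open>m\<close>, but five shifts move \<open>quad b c\<close> by \<open>5 m / 2\<close>.\<close>

lemma min_eq_0:
  assumes Y: "norm (quad b c) = m"
  shows "m = 0"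
proof (rule ccontr)
  assume "m \<noteq> 0"
  with min_nonneg have "m > 0" by simp
  define e where "e = m / 2"
  have e: "0 < e" "e < m" using \<open>m > 0\<close> e_def by auto
  have shifted: "norm (quad b (c - real N * e)) = m" for N
  proof (induction N)
    case 0 then show ?case using Y by simp
  next
    case (Suc N)
    have "norm (quad b (c - real N * e - e)) = m" using norm_quad_shift[OF Suc e] .
    moreover have "c - real N * e - e = c - real (Suc N) * e" by (simp add: algebra_simps)
    ultimately show ?case by simp
  qed
  have "quad b (c - real 5 * e) = quad b c - of_real (5 * e)" unfolding quad_def by simp
  then have "norm (of_real (5 * e) :: 'k) - norm (quad b c) \<le> norm (quad b (c - real 5 * e))"
    by (metis norm_minus_commute norm_triangle_ineq2)
  then show False using shifted[of 5] Y e_def \<open>m > 0\<close> by simp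
qed

end

lemma nonreal_dist_Reals_pos:
  fixes a :: "'k::real_normed_field"
  assumes "a \<notin> \<real>"
  shows "\<exists>\<delta>>0. \<forall>r. \<delta> \<le> norm (a - of_real r)"
proof -
  define R where "R = 2 * norm a + 1"
  have "\<exists>x\<in>{-R..R}. \<forall>y\<in>{-R..R}. norm (a - of_real x) \<le> norm (a - of_real y)"
    by (rule continuous_attains_inf) (auto simp: R_def intro!: continuous_intros)
  then obtain r0 where r0: "\<And>y. y \<in> {-R..R} \<Longrightarrow> norm (a - of_real r0) \<le> norm (a - of_real y)"
    by blast
  have "norm (a - of_real r0) \<le> norm (a - of_real r)" for r
  proof (cases "r \<in> {-R..R}")
    case True then show ?thesis using r0 by blast
  next
    case False
    have "norm (of_real r :: 'k) \<le> norm (a - of_real r) + norm a"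
      by (metis add.commute norm_minus_commute norm_triangle_sub)
    then have "norm (a - of_real r) \<ge> norm (a - of_real 0)" using False R_def by auto
    moreover have "R \<ge> 1" unfolding R_def using norm_ge_zero[of a] by linarith
    then have "0 \<in> {-R..R}" by simp
    ultimately show ?thesis using r0[of 0] by simp
  qed
  moreover have "norm (a - of_real r0) > 0" using assms by (auto simp: Reals_def)
  ultimately show ?thesis by blast
qed

lemma quadratic_norm_attains_min:
  fixes a :: "'k::real_normed_field"
  assumes "a \<notin> \<real>"
  shows "\<exists>b c. \<forall>b' c'. norm (a * a + of_real b * a + of_real c) \<le> norm (a * a + of_real b' * a + of_real c')"
proof -
  obtain \<delta> where "\<delta> > 0" and \<delta>: "\<And>r. \<delta> \<le> norm (a - of_real r)"
    using nonreal_dist_Reals_pos[OF assms] by blast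
  have linear_lower: "\<bar>b\<bar> * \<delta> \<le> norm (of_real b * a + of_real c :: 'k)" for b c
  proof (cases "b = 0")
    case False
    have "of_real b * a + of_real c = (of_real b :: 'k) * (a - of_real (- c / b))"
      using False by (simp add: algebra_simps of_real_divide)
    then show ?thesis using \<delta>[of "-c/b"] by (simp add: norm_mult mult_left_mono)
  qed simp
  define f where "f p = norm (a * a + of_real (fst p) * a + of_real (snd p))" for p :: "real \<times> real"
  \<comment> \<open>outside this box \<open>f\<close> exceeds \<open>f (0, 0)\<close>\<close>
  define B where "B = 2 * norm (a * a) / \<delta>"
  define C where "C = 2 * norm (a * a) + B * norm a"
  have "B \<ge> 0" "C \<ge> 0" using \<open>\<delta> > 0\<close> by (simp_all add: B_def C_def)
  then have "\<exists>x\<in>{-B..B} \<times> {-C..C}. \<forall>y\<in>{-B..B} \<times> {-C..C}. f x \<le> f y"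
    by (intro continuous_attains_inf) (auto simp: f_def intro!: continuous_intros compact_Times)
  then obtain p0 where p0: "\<And>y. y \<in> {-B..B} \<times> {-C..C} \<Longrightarrow> f p0 \<le> f y" by blast
  have "f (0, 0) = norm (a * a)" by (simp add: f_def)
  then have f0: "f p0 \<le> norm (a * a)" using p0[of "(0, 0)"] \<open>B \<ge> 0\<close> \<open>C \<ge> 0\<close> by simp
  have "f p0 \<le> f (b, c)" for b c
  proof (rule ccontr)
    assume "\<not> ?thesis"
    then have lt: "norm (a * a + of_real b * a + of_real c) < f p0" by (simp add: f_def)
    have "norm (of_real b * a + of_real c :: 'k) \<le> norm (a * a + of_real b * a + of_real c) + norm (a * a)"
      by (metis add.assoc add_diff_cancel_left' norm_triangle_ineq4)
    then have h: "norm (of_real b * a + of_real c :: 'k) \<le> 2 * norm (a * a)" using lt f0 by simp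
    then have "\<bar>b\<bar> * \<delta> \<le> 2 * norm (a * a)" using linear_lower[of b c] by simp
    then have bB: "\<bar>b\<bar> \<le> B" unfolding B_def using \<open>\<delta> > 0\<close> by (simp add: field_simps)
    have "norm (of_real c :: 'k) \<le> norm (of_real b * a + of_real c :: 'k) + norm (of_real b * a :: 'k)"
      by (metis add_diff_cancel_left' norm_triangle_ineq4 add.commute)
    then have "\<bar>c\<bar> \<le> 2 * norm (a * a) + \<bar>b\<bar> * norm a" using h by (simp add: norm_mult)
    also have "\<dots> \<le> C" unfolding C_def using bB by (simp add: mult_right_mono)
    finally have "f p0 \<le> f (b, c)" using bB by (intro p0) auto
    then show False using lt by (simp add: f_def)
  qed
  then show ?thesis unfolding f_def by (intro exI[of _ "fst p0"] exI[of _ "snd p0"]) simp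
qed

theorem real_normed_field_quadratic_root:
  fixes a :: "'k::real_normed_field"
  shows "\<exists>b c. a * a + of_real b * a + of_real c = 0"
proof (cases "a \<in> \<real>")
  case True
  then obtain r where r: "a = of_real r" by (auto elim: Reals_cases)
  have "a * a + of_real (-2 * r) * a + of_real (r * r) = 0"
    unfolding r by (simp only: of_real_mult[symmetric] of_real_add[symmetric]) simp
  then show ?thesis by blast
next
  case False
  then obtain b c where min: "\<And>b' c'. norm (a * a + of_real b * a + of_real c) \<le> norm (a * a + of_real b' * a + of_real c')"
    using quadratic_norm_attains_min by blast
  interpret quadratic_norm_min a "norm (a * a + of_real b * a + of_real c)"
    using min by unfold_locales simp_all
  have "norm (a * a + of_real b * a + of_real c) = 0" using min_eq_0[of b c] by (simp add: quad_def)
  then show ?thesis by auto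
qed

lemma nonreal_imp_imaginary_unit:
  fixes x :: "'k::real_normed_field"
  assumes "x \<notin> \<real>"
  shows "\<exists>r t u. x = of_real r + of_real t * u \<and> u * u = -1"
proof -
  obtain b c where bc: "x * x + of_real b * x + of_real c = 0"
    using real_normed_field_quadratic_root by blast
  define p where "p = x + of_real (b / 2)"
  define D where "D = b * b / 4 - c"
  have "p * p = x * x + of_real b * x + of_real (b * b / 4)" unfolding p_def
    by (simp add: algebra_simps of_real_divide)
  also have "\<dots> = of_real D" using bc unfolding D_def by (simp add: eq_neg_iff_add_eq_0 [symmetric])
  finally have pp: "p * p = of_real D" .
  have "D < 0"
  proof (rule ccontr)
    assume "\<not> D < 0"
    then have "of_real (sqrt D) * of_real (sqrt D) = (of_real D :: 'k)"
      by (simp flip: of_real_mult)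
    then have "(p - of_real (sqrt D)) * (p + of_real (sqrt D)) = 0" using pp by (simp add: algebra_simps)
    then have "p = of_real (sqrt D) \<or> p = - of_real (sqrt D)" by (simp add: eq_neg_iff_add_eq_0)
    then have "p \<in> \<real>" by auto
    moreover have "x = p - of_real (b / 2)" unfolding p_def by simp
    ultimately have "x \<in> \<real>" by simp
    then show False using assms by simp
  qed
  define t where "t = sqrt (- D)"
  have "t > 0" unfolding t_def using \<open>D < 0\<close> by simp
  have tt: "of_real t * of_real t = (of_real (- D) :: 'k)"
    unfolding t_def using \<open>D < 0\<close> by (simp flip: of_real_mult)
  define u where "u = p / of_real t"
  have "u * u = of_real D / of_real (- D)" unfolding u_def using pp tt by simp
  also have "\<dots> = -1" using \<open>D < 0\<close> by (simp flip: of_real_divide)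
  finally have "u * u = -1" .
  moreover have "x = of_real (- b / 2) + of_real t * u" unfolding u_def p_def using \<open>t > 0\<close> by simp
  ultimately show ?thesis by blast
qed

theorem real_normed_field_Reals_or_complex:
  "(\<forall>x::'k::real_normed_field. x \<in> \<real>) \<or>
   (\<exists>j::'k. j * j = -1 \<and> (\<forall>x. \<exists>r s. x = of_real r + of_real s * j))"
proof (cases "\<forall>x::'k. x \<in> \<real>")
  case False
  then obtain x0 :: 'k where "x0 \<notin> \<real>" by blast
  then obtain j :: 'k where j: "j * j = -1" using nonreal_imp_imaginary_unit by blast
  have "\<exists>r s. x = of_real r + of_real s * j" for x
  proof (cases "x \<in> \<real>")
    case True
    then obtain r where "x = of_real r" by (auto elim: Reals_cases)
    then show ?thesis by (intro exI[of _ r] exI[of _ 0]) simp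
  next
    case False
    then obtain r t u where x: "x = of_real r + of_real t * u" and "u * u = -1"
      using nonreal_imp_imaginary_unit by blast
    then have "(u - j) * (u + j) = 0" using j by (simp add: algebra_simps)
    then have "u = j \<or> u = - j" by (simp add: eq_neg_iff_add_eq_0)
    then show ?thesis
    proof
      assume "u = - j"
      then have "x = of_real r + of_real (- t) * j" using x by simp
      then show ?thesis by blast
    qed (use x in blast)
  qed
  then show ?thesis using j by blast
qed simp

section \<open>Rank-one idempotents\<close>

definition bounded_functional :: "('k::real_normed_field \<Rightarrow> 'v::real_normed_vector \<Rightarrow> 'v) \<Rightarrow> ('v \<Rightarrow> 'k) \<Rightarrow> bool" where
  "bounded_functional sc \<psi> \<longleftrightarrow> (\<forall>x y. \<psi> (x + y) = \<psi> x + \<psi> y) \<and> (\<forall>c x. \<psi> (sc c x) = c * \<psi> x)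
     \<and> (\<exists>K. \<forall>x. norm (\<psi> x) \<le> K * norm x)"

lemma bounded_functional_of_real:
  fixes sc :: "'k::real_normed_field \<Rightarrow> 'v::banach \<Rightarrow> 'v"
  assumes "kbanach sc" and Reals: "\<forall>c::'k. c \<in> \<real>"
    and "linear g" and bound: "\<And>x. \<bar>g x\<bar> \<le> norm x"
  shows "bounded_functional sc (\<lambda>x. of_real (g x))"
  unfolding bounded_functional_def
proof (intro conjI allI exI)
  show "(of_real (g (x + y)) :: 'k) = of_real (g x) + of_real (g y)" for x y
    using \<open>linear g\<close> by (simp add: linear_add)
  show "(of_real (g (sc c x)) :: 'k) = c * of_real (g x)" for c x
  proof -
    obtain r where "c = of_real r" using Reals by (auto elim: Reals_cases)
    then show ?thesis using \<open>kbanach sc\<close> \<open>linear g\<close> by (simp add: kbanach_def linear_scale)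
  qed
  show "norm (of_real (g x) :: 'k) \<le> 1 * norm x" for x using bound[of x] by simp
qed

lemma bounded_functional_complexify:
  fixes sc :: "'k::real_normed_field \<Rightarrow> 'v::banach \<Rightarrow> 'v"
  assumes kb: "kbanach sc" and j: "j * j = -1" and span_j: "\<forall>c::'k. \<exists>r s. c = of_real r + of_real s * j"
    and "linear g" and bound: "\<And>x. \<bar>g x\<bar> \<le> norm x"
  shows "bounded_functional sc (\<lambda>x. of_real (g x) - j * of_real (g (sc j x)))" (is "bounded_functional sc ?\<psi>")
  unfolding bounded_functional_def
proof (intro conjI allI exI)
  interpret vector_space sc using kb by (simp add: kbanach_def)
  have sc_real: "sc (of_real r) x = r *\<^sub>R x" for r x using kb by (simp add: kbanach_def)
  have g_add: "g (x + y) = g x + g y" and g_scaleR: "g (r *\<^sub>R x) = r * g x" for x y r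
    using \<open>linear g\<close> by (simp_all add: linear_add linear_scale)
  show add: "?\<psi> (x + y) = ?\<psi> x + ?\<psi> y" for x y by (simp add: g_add scale_right_distrib algebra_simps)
  have scaleR: "?\<psi> (r *\<^sub>R x) = of_real r * ?\<psi> x" for r x
  proof -
    have "sc j (r *\<^sub>R x) = r *\<^sub>R sc j x" by (metis sc_real scale_scale mult.commute)
    then show ?thesis by (simp add: g_scaleR algebra_simps)
  qed
  have "j * (j * z) = - z" for z using j by (simp flip: mult.assoc)
  moreover have "sc j (sc j x) = - x" for x using j by simp
  moreover have "g (- x) = - g x" for x using \<open>linear g\<close> by (simp add: linear_neg)
  ultimately have scale_j: "?\<psi> (sc j x) = j * ?\<psi> x" for x by (simp add: right_diff_distrib)
  show "?\<psi> (sc c x) = c * ?\<psi> x" for c x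
  proof -
    obtain r s where c: "c = of_real r + of_real s * j" using span_j by blast
    have "sc c x = r *\<^sub>R x + s *\<^sub>R sc j x" unfolding c by (simp add: scale_left_distrib flip: sc_real)
    then have "?\<psi> (sc c x) = of_real r * ?\<psi> x + of_real s * (j * ?\<psi> x)"
      by (simp only: add scaleR scale_j)
    then show ?thesis unfolding c by (simp add: algebra_simps)
  qed
  show "norm (?\<psi> x) \<le> (1 + norm j * norm j) * norm x" for x
  proof -
    have "norm (?\<psi> x) \<le> \<bar>g x\<bar> + norm j * \<bar>g (sc j x)\<bar>"
      using norm_triangle_ineq4[of "of_real (g x)" "j * of_real (g (sc j x))"] by (simp add: norm_mult)
    also have "\<dots> \<le> norm x + norm j * (norm j * norm x)"
      using bound[of x] bound[of "sc j x"] kb by (intro add_mono mult_left_mono) (auto simp: kbanach_def)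
    finally show ?thesis by (simp add: algebra_simps)
  qed
qed

lemma complexify_nonzero:
  fixes j :: "'k::real_normed_field"
  assumes "j * j = -1" and "a \<noteq> 0"
  shows "of_real a - j * of_real b \<noteq> 0"
proof
  assume "of_real a - j * of_real b = 0"
  with \<open>a \<noteq> 0\<close> have "b \<noteq> 0" and "j = of_real (a / b)" by (auto simp: of_real_divide field_simps)
  then have "of_real ((a / b) * (a / b)) = (of_real (-1) :: 'k)" using assms(1) by simp
  then have "(a / b) * (a / b) = -1" using of_real_eq_iff by blast
  moreover have "(a / b) * (a / b) \<ge> 0" by simp
  ultimately show False by simp
qed

theorem kbanach_bounded_functional_nonzero:
  fixes sc :: "'k::real_normed_field \<Rightarrow> 'v::banach \<Rightarrow> 'v"
  assumes "kbanach sc" and "v \<noteq> 0"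
  shows "\<exists>\<psi>. bounded_functional sc \<psi> \<and> \<psi> v \<noteq> 0"
proof -
  obtain g :: "'v \<Rightarrow> real" where g: "linear g" "\<And>x. \<bar>g x\<bar> \<le> norm x" and "g v \<noteq> 0"
    using real_norming_functional[OF \<open>v \<noteq> 0\<close>] \<open>v \<noteq> 0\<close> by force
  from real_normed_field_Reals_or_complex[where 'k = 'k] show ?thesis
  proof
    assume "\<forall>c::'k. c \<in> \<real>"
    then show ?thesis using bounded_functional_of_real[OF assms(1) _ g] \<open>g v \<noteq> 0\<close> by force
  next
    assume "\<exists>j::'k. j * j = -1 \<and> (\<forall>c. \<exists>r s. c = of_real r + of_real s * j)"
    then obtain j :: 'k where "j * j = -1" "\<forall>c. \<exists>r s. c = of_real r + of_real s * j" by blast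
    then show ?thesis
      using bounded_functional_complexify[OF assms(1) _ _ g] complexify_nonzero \<open>g v \<noteq> 0\<close> by blast
  qed
qed

lemma std_op_alg_linear: "std_op_alg sc A \<Longrightarrow> T \<in> A \<Longrightarrow> Vector_Spaces.linear sc sc T"
  unfolding std_op_alg_def bop_def by blast

lemma std_op_alg_id: "std_op_alg sc A \<Longrightarrow> id \<in> A"
  unfolding std_op_alg_def by blast

lemma std_op_alg_finite_rank: "std_op_alg sc A \<Longrightarrow> finite_rank sc T \<Longrightarrow> T \<in> A"
  unfolding std_op_alg_def by blast

lemma std_op_alg_scalar:
  assumes "std_op_alg sc A"
  shows "(\<lambda>x. sc c x) \<in> A"
proof -
  have "(\<lambda>x. sc c (id x)) \<in> A" using assms unfolding std_op_alg_def by blast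
  then show ?thesis by simp
qed

lemma std_op_alg_zero:
  assumes "kbanach sc" and "std_op_alg sc A"
  shows "(\<lambda>x. 0) \<in> A"
proof -
  interpret vector_space sc using \<open>kbanach sc\<close> by (simp add: kbanach_def)
  show ?thesis using std_op_alg_scalar[OF \<open>std_op_alg sc A\<close>, of 0] by simp
qed

lemma inf_dim_span_neq_UNIV: "inf_dim sc \<Longrightarrow> finite F \<Longrightarrow> module.span sc F \<noteq> UNIV"
  unfolding inf_dim_def by blast

lemma inf_dim_ex_nonzero:
  assumes "vector_space sc" and "inf_dim (sc :: 'k::field \<Rightarrow> 'v::ab_group_add \<Rightarrow> 'v)"
  shows "\<exists>v::'v. v \<noteq> 0"
proof -
  interpret vector_space sc by fact
  have "span {} \<noteq> (UNIV :: 'v set)" using inf_dim_span_neq_UNIV[OF assms(2)] by blast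
  then show ?thesis by auto
qed

lemma rank_one_projection_finite_rank:
  fixes sc :: "'k::real_normed_field \<Rightarrow> 'v::banach \<Rightarrow> 'v"
  assumes kb: "kbanach sc" and \<psi>: "bounded_functional sc \<psi>" and "\<psi> v \<noteq> 0"
  shows "finite_rank sc (\<lambda>x. sc (\<psi> x / \<psi> v) v)"
proof -
  interpret vector_space sc using kb by (simp add: kbanach_def)
  obtain K where K: "\<And>x. norm (\<psi> x) \<le> K * norm x" using \<psi> by (auto simp: bounded_functional_def)
  have "Vector_Spaces.linear sc sc (\<lambda>x. sc (\<psi> x / \<psi> v) v)"
    using \<psi> unfolding Vector_Spaces.linear_iff bounded_functional_def
    by (simp add: vector_space_axioms add_divide_distrib scale_left_distrib)
  moreover have "norm (sc (\<psi> x / \<psi> v) v) \<le> (K * norm v / norm (\<psi> v)) * norm x" for x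
  proof -
    have "norm (sc (\<psi> x / \<psi> v) v) = norm (\<psi> x) / norm (\<psi> v) * norm v"
      using kb by (simp add: kbanach_def norm_divide)
    also have "\<dots> \<le> K * norm x / norm (\<psi> v) * norm v"
      using K[of x] by (intro mult_right_mono divide_right_mono) auto
    finally show ?thesis by (simp add: field_simps)
  qed
  moreover have "range (\<lambda>x. sc (\<psi> x / \<psi> v) v) \<subseteq> span {v}" by (auto intro: span_scale span_base)
  ultimately show ?thesis unfolding finite_rank_def bop_def by blast
qed

theorem std_op_alg_nonscalar_idempotent:
  fixes sc :: "'k::real_normed_field \<Rightarrow> 'v::banach \<Rightarrow> 'v"
  assumes kb: "kbanach sc" and inf: "inf_dim sc" and A: "std_op_alg sc A"
  shows "\<exists>P\<in>A. (\<forall>x. P (P x) = P x) \<and> (\<nexists>c. P = (\<lambda>x. sc c x))"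
proof -
  interpret vector_space sc using kb by (simp add: kbanach_def)
  obtain v :: 'v where "v \<noteq> 0" using inf_dim_ex_nonzero[OF vector_space_axioms inf] by blast
  then obtain \<psi> where \<psi>: "bounded_functional sc \<psi>" and "\<psi> v \<noteq> 0"
    using kbanach_bounded_functional_nonzero[OF kb] by blast
  define P where "P x = sc (\<psi> x / \<psi> v) v" for x
  have fr: "finite_rank sc P" unfolding P_def by (rule rank_one_projection_finite_rank[OF kb \<psi> \<open>\<psi> v \<noteq> 0\<close>])
  have "P (P x) = P x" for x using \<psi> \<open>\<psi> v \<noteq> 0\<close> by (simp add: P_def bounded_functional_def)
  moreover have "\<nexists>c. P = (\<lambda>x. sc c x)"
  proof
    assume "\<exists>c. P = (\<lambda>x. sc c x)"
    then obtain c where c: "P = (\<lambda>x. sc c x)" by blast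
    \<comment> \<open>\<open>P v = v\<close> forces \<open>c = 1\<close>, so \<open>P\<close> would be onto, but it has finite rank\<close>
    have "P v = v" unfolding P_def using \<open>\<psi> v \<noteq> 0\<close> by simp
    then have "sc (c - 1) v = 0" using c by (simp add: scale_left_diff_distrib)
    then have "c = 1" using \<open>v \<noteq> 0\<close> by simp
    then have "range P = UNIV" using c by auto
    moreover obtain F where "finite F" "range P \<subseteq> span F" using fr unfolding finite_rank_def by blast
    ultimately show False using inf_dim_span_neq_UNIV[OF inf] by auto
  qed
  ultimately show ?thesis using std_op_alg_finite_rank[OF A fr] by blast
qed

section \<open>Preservers of quadratic operator matrices\<close>

locale quadratic2_preserver =
  fixes scX :: "'k::real_normed_field \<Rightarrow> 'x::banach \<Rightarrow> 'x" and scY :: "'k \<Rightarrow> 'y::banach \<Rightarrow> 'y"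
    and A :: "('x \<Rightarrow> 'x) set" and B :: "('y \<Rightarrow> 'y) set" and \<phi> :: "('x \<Rightarrow> 'x) \<Rightarrow> ('y \<Rightarrow> 'y)"
  assumes kbanach_X: "kbanach scX" and kbanach_Y: "kbanach scY"
    and inf_dim_X: "inf_dim scX" and inf_dim_Y: "inf_dim scY"
    and std_A: "std_op_alg scX A" and std_B: "std_op_alg scY B"
    and bij: "bij_betw \<phi> A B"
    and preserves: "\<And>T. (\<forall>i j. T i j \<in> A) \<Longrightarrow>
          (quadratic2 scX T \<longleftrightarrow> quadratic2 scY (\<lambda>i j. \<phi> (T i j)))"
begin

sublocale X: vector_space scX using kbanach_X by (simp add: kbanach_def)
sublocale Y: vector_space scY using kbanach_Y by (simp add: kbanach_def)

lemma phi_in_B: "T \<in> A \<Longrightarrow> \<phi> T \<in> B"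
  using bij by (simp add: bij_betwE)

lemma phi_preimage: "Z \<in> B \<Longrightarrow> \<exists>T\<in>A. \<phi> T = Z"
  using bij unfolding bij_betw_def by blast

lemma rows_transfer:
  assumes "X \<in> A" and "Y \<in> A"
  shows "scalar_on_ranges scX (\<lambda>z. X z + Y z) X Y
     \<longleftrightarrow> scalar_on_ranges scY (\<lambda>z. \<phi> X z + \<phi> Y z) (\<phi> X) (\<phi> Y)"
proof -
  have "(\<lambda>i j. \<phi> (mat2_rows X Y i j)) = mat2_rows (\<phi> X) (\<phi> Y)"
    by (intro ext) (simp add: mat2_rows_def)
  moreover have "\<forall>i j. mat2_rows X Y i j \<in> A" using assms by (simp add: mat2_rows_def)
  ultimately show ?thesis
    using preserves[of "mat2_rows X Y"] assms phi_in_B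
      quadratic2_mat2_rows_iff[OF X.vector_space_axioms std_op_alg_linear[OF std_A] std_op_alg_linear[OF std_A]]
      quadratic2_mat2_rows_iff[OF Y.vector_space_axioms std_op_alg_linear[OF std_B] std_op_alg_linear[OF std_B]]
    by simp
qed

lemma phi_zero: "\<phi> (\<lambda>x. 0) = (\<lambda>y. 0)"
proof -
  obtain W where W: "W \<in> A" "\<phi> W = (\<lambda>y. 0)" using phi_preimage std_op_alg_zero[OF kbanach_Y std_B] by blast
  have W_rel: "scalar_on_ranges scX (\<lambda>z. W z + Y z) W Y"
    if "Y \<in> A" and "scalar_on_ranges scX (\<lambda>z. Y z + Y z) Y Y" for Y
  proof -
    have "scalar_on_ranges scY (\<lambda>z. \<phi> Y z + \<phi> Y z) (\<phi> Y) (\<phi> Y)" using rows_transfer that by blast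
    then have "scalar_on_ranges scY (\<lambda>z. 0 + \<phi> Y z) (\<lambda>y. 0) (\<phi> Y)"
      using scalar_on_ranges_double[OF Y.vector_space_axioms]
        scalar_on_ranges_zero_left[OF std_op_alg_linear[OF std_B phi_in_B[OF \<open>Y \<in> A\<close>]]] by blast
    then show ?thesis using rows_transfer[OF W(1) \<open>Y \<in> A\<close>] W(2) by simp
  qed
  have "scalar_on_ranges scX (\<lambda>z. id z + id z) id id" unfolding scalar_on_ranges_def
    by (intro exI[of _ 2]) (simp flip: X.scale_left_distrib[of 1 1, simplified])
  from W_rel[OF std_op_alg_id[OF std_A] this]
  have "scalar_on_ranges scX (\<lambda>z. W z + id z) W id" .
  then obtain c where "\<And>x. W x + x = scX c x" unfolding scalar_on_ranges_def by auto
  then have W_scalar: "W x = scX (c - 1) x" for x by (simp add: X.scale_left_diff_distrib eq_diff_eq)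
  obtain P where P: "P \<in> A" "\<And>x. P (P x) = P x" "\<nexists>c. P = (\<lambda>x. scX c x)"
    using std_op_alg_nonscalar_idempotent[OF kbanach_X inf_dim_X std_A] by blast
  have "scalar_on_ranges scX (\<lambda>z. P z + P z) P P" unfolding scalar_on_ranges_def
    by (intro exI[of _ 2]) (simp add: P(2) flip: X.scale_left_distrib[of 1 1, simplified])
  then have "scalar_on_ranges scX (\<lambda>z. W z + P z) W P" using W_rel P(1) by blast
  then obtain d where d: "\<And>x. W (W x) + P (W x) = scX d (W x)" unfolding scalar_on_ranges_def by auto
  \<comment> \<open>if \<open>W = \<mu> I\<close> with \<open>\<mu> \<noteq> 0\<close>, this identity would make \<open>P = (d - \<mu>) I\<close> scalar\<close>
  have "c - 1 = 0"
  proof (rule ccontr)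
    assume "c - 1 \<noteq> 0"
    interpret P: Vector_Spaces.linear scX scX P using std_op_alg_linear[OF std_A P(1)] .
    have "scX (c - 1) (scX (c - 1) x) + scX (c - 1) (P x) = scX d (scX (c - 1) x)" for x
      using d[of x] by (simp add: W_scalar P.scale)
    then have "scX (c - 1) (P x) = scX (c - 1) (scX (d - (c - 1)) x)" for x
      by (simp add: X.scale_left_diff_distrib algebra_simps mult.commute)
    then have "P x = scX (d - (c - 1)) x" for x using \<open>c - 1 \<noteq> 0\<close> X.scale_cancel_left by blast
    then have "P = (\<lambda>x. scX (d - (c - 1)) x)" by blast
    then show False using P(3) by blast
  qed
  then have "W = (\<lambda>x. 0)" using W_scalar by (auto simp: fun_eq_iff)
  then show ?thesis using W(2) by simp
qed

lemma top_row_transfer: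
  assumes "X \<in> A" and "Y \<in> A"
  shows "scalar_on_ranges scX X X Y \<longleftrightarrow> scalar_on_ranges scY (\<phi> X) (\<phi> X) (\<phi> Y)"
proof -
  obtain x0 :: 'x where "x0 \<noteq> 0" using inf_dim_ex_nonzero[OF X.vector_space_axioms inf_dim_X] by blast
  obtain y0 :: 'y where "y0 \<noteq> 0" using inf_dim_ex_nonzero[OF Y.vector_space_axioms inf_dim_Y] by blast
  have "(\<lambda>i j. \<phi> (mat2_top_row X Y i j)) = mat2_top_row (\<phi> X) (\<phi> Y)"
    by (intro ext) (simp add: mat2_top_row_def phi_zero)
  moreover have "\<forall>i j. mat2_top_row X Y i j \<in> A"
    using assms std_op_alg_zero[OF kbanach_X std_A] by (simp add: mat2_top_row_def)
  ultimately show ?thesis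
    using preserves[of "mat2_top_row X Y"] assms phi_in_B
      quadratic2_mat2_top_row_iff[OF X.vector_space_axioms std_op_alg_linear[OF std_A]
        std_op_alg_linear[OF std_A] \<open>x0 \<noteq> 0\<close>]
      quadratic2_mat2_top_row_iff[OF Y.vector_space_axioms std_op_alg_linear[OF std_B]
        std_op_alg_linear[OF std_B] \<open>y0 \<noteq> 0\<close>]
    by simp
qed

lemma phi_scalars: "\<phi> ` {(\<lambda>x. scX c x) | c. True} = {(\<lambda>y. scY c y) | c. True}"
proof
  show "\<phi> ` {(\<lambda>x. scX c x) | c. True} \<subseteq> {(\<lambda>y. scY c y) | c. True}"
  proof
    fix Z assume "Z \<in> \<phi> ` {(\<lambda>x. scX c x) | c. True}"
    then obtain c where Z: "Z = \<phi> (\<lambda>x. scX c x)" by blast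
    obtain I where I: "I \<in> A" "\<phi> I = id" using phi_preimage std_op_alg_id[OF std_B] by blast
    have "scalar_on_ranges scY Z Z id"
      using top_row_transfer[OF std_op_alg_scalar[OF std_A] I(1)] I(2) Z scalar_on_ranges_scalar by metis
    then show "Z \<in> {(\<lambda>y. scY c y) | c. True}" using scalar_on_ranges_id_imp_scalar by blast
  qed
  show "{(\<lambda>y. scY c y) | c. True} \<subseteq> \<phi> ` {(\<lambda>x. scX c x) | c. True}"
  proof
    fix Z assume "Z \<in> {(\<lambda>y. scY c y) | c. True}"
    then obtain c where Z: "Z = (\<lambda>y. scY c y)" by blast
    obtain X where X: "X \<in> A" "\<phi> X = Z" using phi_preimage std_op_alg_scalar[OF std_B] Z by blast
    have "scalar_on_ranges scX X X id"
      using top_row_transfer[OF X(1) std_op_alg_id[OF std_A]] X(2) Z scalar_on_ranges_scalar by metis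
    then obtain d where "X = (\<lambda>x. scX d x)" using scalar_on_ranges_id_imp_scalar by blast
    then show "Z \<in> \<phi> ` {(\<lambda>x. scX c x) | c. True}" using X(2) by blast
  qed
qed

end

theorem lemma2p1:
  fixes scX :: "'k::real_normed_field \<Rightarrow> 'x::banach \<Rightarrow> 'x"
    and scY :: "'k \<Rightarrow> 'y::banach \<Rightarrow> 'y"
    and A :: "('x \<Rightarrow> 'x) set" and B :: "('y \<Rightarrow> 'y) set"
    and \<phi> :: "('x \<Rightarrow> 'x) \<Rightarrow> ('y \<Rightarrow> 'y)"
  assumes "kbanach scX" and "kbanach scY"
    and "inf_dim scX" and "inf_dim scY"
    and "std_op_alg scX A" and "std_op_alg scY B"
    and "bij_betw \<phi> A B"
    and "\<And>T. (\<forall>i j. T i j \<in> A) \<Longrightarrow>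
           (quadratic2 scX T \<longleftrightarrow> quadratic2 scY (\<lambda>i j. \<phi> (T i j)))"
  shows "\<phi> (\<lambda>x. 0) = (\<lambda>y. 0)
    \<and> \<phi> ` {(\<lambda>x. scX c x) | c. True} = {(\<lambda>y. scY c y) | c. True}
    \<and> (\<exists>lam. \<phi> id = (\<lambda>y. scY lam y))"
proof -
  interpret quadratic2_preserver scX scY A B \<phi>
    using assms by unfold_locales
  have "id = (\<lambda>x. scX 1 x)" by auto
  then have "\<phi> id \<in> {(\<lambda>y. scY c y) | c. True}" using phi_scalars by blast
  then show ?thesis using phi_zero phi_scalars by blast
qed

end
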